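(* Let $\phi$ be a formula of $\mathsf{BSML}^{\sqcup}$ or of $\mathsf{BSML}^{\oslash}$. If $\phi$ is not valid, then there is a model $M=(W,R,V)$ with $W$ finite and a state $s\subseteq W$ such that $M,s\not\models\phi$.
   Context: Formulas: $\phi ::= p \mid \neg\phi \mid (\phi\wedge\phi) \mid (\phi\vee\phi) \mid \Diamond\phi \mid \mathrm{NE}$ for $\mathsf{BSML}$; $\mathsf{BSML}^{\sqcup}$ adds $\phi\sqcup\phi$, $\mathsf{BSML}^{\oslash}$ adds $\oslash\phi$. Models $M=(W,R,V)$: $W\ne\emptyset$, $R\subseteq W\times W$, $V$ a valuation; states are subsets of $W$; $R[w]=\{v:wRv\}$. Support/anti-support: $s\models p$ iff $s\subseteq V(p)$; $s\dashv p$ iff $s\cap V(p)=\emptyset$; $s\models\mathrm{NE}$ iff $s\ne\emptyset$; $s\dashv\mathrm{NE}$ iff $s=\emptyset$; $s\models\neg\phi$ iff $s\dashv\phi$; $s\dashv\neg\phi$ iff $s\models\phi$; $s\models\phi\wedge\psi$ iff both; $s\dashv\phi\wedge\psi$ iff $s=t\cup u$ with $t\dashv\phi$, $u\dashv\psi$; $s\models\phi\vee\psi$ iff $s=t\cup u$ with $t\models\phi$, $u\models\psi$; $s\dashv\phi\vee\psi$ iff $s\dashv\phi$ and $s\dashv\psi$; $s\models\phi\sqcup\psi$ iff $s\models\phi$ or $s\models\psi$; $s\dashv\phi\sqcup\psi$ iff $s\dashv\phi$ and $s\dashv\psi$; $s\models\Diamond\phi$ iff each $w\in s$ has a nonempty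 $t\subseteq R[w]$ with $t\models\phi$; $s\dashv\Diamond\phi$ iff $R[w]\dashv\phi$ for all $w\in s$; $s\models\oslash\phi$ iff $s\models\phi$ or $s=\emptyset$; $s\dashv\oslash\phi$ iff $s\dashv\phi$. $\phi$ is valid if $M,s\models\phi$ for every model $M$ and every state $s$ on $M$. *)

theory Defs
  imports Main
begin

text \<open>Formulas of BSML extended with both global disjunction (Gor) and the
  emptiness operator (Empt); the sublanguages are carved out by predicates.\<close>

datatype 'p form =
    Prop 'p
  | Neg "'p form"
  | Conj "'p form" "'p form"
  | Disj "'p form" "'p form"
  | Dia "'p form"
  | NE
  | Gor "'p form" "'p form"
  | Empt "'p form"

fun no_empt :: "'p form \<Rightarrow> bool" where
  "no_empt (Prop p) = True"
| "no_empt (Neg a) = no_empt a"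
| "no_empt (Conj a b) = (no_empt a \<and> no_empt b)"
| "no_empt (Disj a b) = (no_empt a \<and> no_empt b)"
| "no_empt (Dia a) = no_empt a"
| "no_empt NE = True"
| "no_empt (Gor a b) = (no_empt a \<and> no_empt b)"
| "no_empt (Empt a) = False"

fun no_gor :: "'p form \<Rightarrow> bool" where
  "no_gor (Prop p) = True"
| "no_gor (Neg a) = no_gor a"
| "no_gor (Conj a b) = (no_gor a \<and> no_gor b)"
| "no_gor (Disj a b) = (no_gor a \<and> no_gor b)"
| "no_gor (Dia a) = no_gor a"
| "no_gor NE = True"
| "no_gor (Gor a b) = False"
| "no_gor (Empt a) = no_gor a"

definition BSML_gor :: "'p form \<Rightarrow> bool" where
  "BSML_gor \<phi> = no_empt \<phi>"

definition BSML_empt :: "'p form \<Rightarrow> bool" where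
  "BSML_empt \<phi> = no_gor \<phi>"

definition is_model :: "'w set \<Rightarrow> ('w \<times> 'w) set \<Rightarrow> ('p \<Rightarrow> 'w set) \<Rightarrow> bool" where
  "is_model W R V \<longleftrightarrow> W \<noteq> {} \<and> R \<subseteq> W \<times> W \<and> (\<forall>p. V p \<subseteq> W)"

text \<open>sem W R V True s phi: s supports phi;  sem W R V False s phi: s anti-supports phi.\<close>
fun sem :: "'w set \<Rightarrow> ('w \<times> 'w) set \<Rightarrow> ('p \<Rightarrow> 'w set) \<Rightarrow> bool \<Rightarrow> 'w set \<Rightarrow> 'p form \<Rightarrow> bool" where
  "sem W R V True s (Prop p) = (s \<subseteq> V p)"
| "sem W R V False s (Prop p) = (s \<inter> V p = {})"
| "sem W R V True s NE = (s \<noteq> {})"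
| "sem W R V False s NE = (s = {})"
| "sem W R V b s (Neg a) = sem W R V (\<not> b) s a"
| "sem W R V True s (Conj a c) = (sem W R V True s a \<and> sem W R V True s c)"
| "sem W R V False s (Conj a c) =
     (\<exists>t u. s = t \<union> u \<and> sem W R V False t a \<and> sem W R V False u c)"
| "sem W R V True s (Disj a c) =
     (\<exists>t u. s = t \<union> u \<and> sem W R V True t a \<and> sem W R V True u c)"
| "sem W R V False s (Disj a c) = (sem W R V False s a \<and> sem W R V False s c)"
| "sem W R V True s (Gor a c) = (sem W R V True s a \<or> sem W R V True s c)"
| "sem W R V False s (Gor a c) = (sem W R V False s a \<and> sem W R V False s c)"
| "sem W R V True s (Dia a) =
     (\<forall>w\<in>s. \<exists>t. t \<noteq> {} \<and> t \<subseteq> R `` {w} \<and> sem W R V True t a)"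
| "sem W R V False s (Dia a) = (\<forall>w\<in>s. sem W R V False (R `` {w}) a)"
| "sem W R V True s (Empt a) = (sem W R V True s a \<or> s = {})"
| "sem W R V False s (Empt a) = sem W R V False s a"

definition valid :: "'w itself \<Rightarrow> 'p form \<Rightarrow> bool" where
  "valid (_ :: 'w itself) \<phi> \<longleftrightarrow>
     (\<forall>(W :: 'w set) R V s. is_model W R V \<and> s \<subseteq> W \<longrightarrow> sem W R V True s \<phi>)"

end

theory Submission
  imports Defs "HOL-Library.FSet"
begin

text \<open>Whether a state supports a formula \<phi> depends only on which depth-d types over the atoms
  of \<phi> its worlds realise, d being the modal depth of \<phi>: a depth-0 type is the set of atoms true
  at a world, a depth-(k+1) type adds the set of depth-k types of its successors. This holds for
  the language with both global disjunction and the emptiness operator, because every connective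
  is evaluated on unions, subsets or successor sets of a state, and these can be matched along
  equal type images. Over finitely many atoms there are only finitely many types, and they form
  the worlds of a finite canonical model in which the world (k, \<tau>) has depth-k type \<tau>. Replacing
  each world of a countermodel by its depth-d type thus gives a finite countermodel, which is
  copied injectively into the world type when that type is infinite.\<close>

datatype 'p modal_type = MType (label: "'p set") (succs: "'p modal_type fset")

text \<open>Abs_fset is applied to a set that is finite only when P is; hence all facts about
  successor types assume finite P.\<close>

fun mtype :: "'p set \<Rightarrow> ('w \<times> 'w) set \<Rightarrow> ('p \<Rightarrow> 'w set) \<Rightarrow> nat \<Rightarrow> 'w \<Rightarrow> 'p modal_type" where
  "mtype P R V 0 w = MType {p \<in> P. w \<in> V p} {||}"
| "mtype P R V (Suc k) w = MType {p \<in> P. w \<in> V p} (Abs_fset (mtype P R V k ` (R `` {w})))"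

fun mtypes :: "'p set \<Rightarrow> nat \<Rightarrow> 'p modal_type set" where
  "mtypes P 0 = (\<lambda>A. MType A {||}) ` Pow P"
| "mtypes P (Suc k) = case_prod MType ` (Pow P \<times> {S. fset S \<subseteq> mtypes P k})"

fun atoms :: "'p form \<Rightarrow> 'p set" where
  "atoms (Prop p) = {p}"
| "atoms (Neg a) = atoms a"
| "atoms (Conj a b) = atoms a \<union> atoms b"
| "atoms (Disj a b) = atoms a \<union> atoms b"
| "atoms (Dia a) = atoms a"
| "atoms NE = {}"
| "atoms (Gor a b) = atoms a \<union> atoms b"
| "atoms (Empt a) = atoms a"

fun modal_depth :: "'p form \<Rightarrow> nat" where
  "modal_depth (Prop p) = 0"
| "modal_depth (Neg a) = modal_depth a"
| "modal_depth (Conj a b) = max (modal_depth a) (modal_depth b)"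
| "modal_depth (Disj a b) = max (modal_depth a) (modal_depth b)"
| "modal_depth (Dia a) = Suc (modal_depth a)"
| "modal_depth NE = 0"
| "modal_depth (Gor a b) = max (modal_depth a) (modal_depth b)"
| "modal_depth (Empt a) = modal_depth a"

lemma finite_atoms: "finite (atoms \<phi>)"
  by (induction \<phi>) auto

lemma finite_fsets_subset: "finite X \<Longrightarrow> finite {S. fset S \<subseteq> X}"
  using finite_vimageI[of "Pow X" fset] by (simp add: inj_def fset_inject vimage_def)

lemma finite_mtypes: "finite P \<Longrightarrow> finite (mtypes P k)"
  by (induction k) (auto simp: finite_fsets_subset)

lemma mtype_in_mtypes: "finite P \<Longrightarrow> mtype P R V k w \<in> mtypes P k"
proof (induction k arbitrary: w)
  case (Suc k)
  have succ_types: "mtype P R V k ` (R `` {w}) \<subseteq> mtypes P k"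
    using Suc by auto
  then have "finite (mtype P R V k ` (R `` {w}))"
    using finite_mtypes[OF Suc.prems] finite_subset by blast
  then show ?case
    using succ_types
    by (auto simp: Abs_fset_inverse
        intro!: image_eqI[of _ _ "({p \<in> P. w \<in> V p}, Abs_fset (mtype P R V k ` (R `` {w})))"])
qed auto

lemma label_mtype: "label (mtype P R V k w) = {p \<in> P. w \<in> V p}"
  by (cases k) auto

lemma succs_mtype_Suc:
  assumes "finite P"
  shows "fset (succs (mtype P R V (Suc k) w)) = mtype P R V k ` (R `` {w})"
proof -
  have "mtype P R V k ` (R `` {w}) \<subseteq> mtypes P k"
    by (intro image_subsetI mtype_in_mtypes[OF assms])
  then have "finite (mtype P R V k ` (R `` {w}))"
    using finite_mtypes[OF assms] finite_subset by blast
  then show ?thesis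
    by (simp add: Abs_fset_inverse)
qed

lemma mtype_eq_imp_atoms_eq:
  assumes "mtype P R V k w = mtype P R' V' k w'" "p \<in> P"
  shows "w \<in> V p \<longleftrightarrow> w' \<in> V' p"
  using arg_cong[OF assms(1), of label] assms(2) by (auto simp: label_mtype)

lemma image_eq_image_matching:
  assumes "f ` A = g ` B" "t \<subseteq> A"
  shows "f ` t = g ` {x \<in> B. g x \<in> f ` t}"
proof
  show "f ` t \<subseteq> g ` {x \<in> B. g x \<in> f ` t}"
  proof
    fix y
    assume "y \<in> f ` t"
    then obtain b where "b \<in> B" "y = g b"
      using assms by blast
    then show "y \<in> g ` {x \<in> B. g x \<in> f ` t}"
      using \<open>y \<in> f ` t\<close> by blast
  qed
qed blast

lemma image_eq_obtain_subset:
  assumes "f ` A = g ` B" "t \<subseteq> A"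
  obtains t' where "t' \<subseteq> B" "f ` t = g ` t'"
proof
  show "{x \<in> B. g x \<in> f ` t} \<subseteq> B"
    by blast
qed (rule image_eq_image_matching[OF assms])

lemma image_eq_obtain_Un:
  assumes "f ` A = g ` B" "A = t \<union> u"
  obtains t' u' where "B = t' \<union> u'" "f ` t = g ` t'" "f ` u = g ` u'"
proof
  have "g ` B = f ` t \<union> f ` u"
    using assms by (simp add: image_Un)
  then show "B = {x \<in> B. g x \<in> f ` t} \<union> {x \<in> B. g x \<in> f ` u}"
    by blast
  show "f ` t = g ` {x \<in> B. g x \<in> f ` t}" "f ` u = g ` {x \<in> B. g x \<in> f ` u}"
    using image_eq_image_matching[OF assms(1)] assms(2) by simp_all
qed

lemma mtype_Suc_image_eq_obtain_successors:
  assumes "finite P" "mtype P R V (Suc k) ` s = mtype P R' V' (Suc k) ` s'" "w' \<in> s'"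
  obtains w where "w \<in> s" "mtype P R V k ` (R `` {w}) = mtype P R' V' k ` (R' `` {w'})"
proof -
  have "mtype P R' V' (Suc k) w' \<in> mtype P R V (Suc k) ` s"
    using assms(2,3) by simp
  then obtain w where "w \<in> s" "mtype P R V (Suc k) w = mtype P R' V' (Suc k) w'"
    by (auto simp del: mtype.simps)
  then show ?thesis
    using that succs_mtype_Suc[OF assms(1), of R V k w] succs_mtype_Suc[OF assms(1), of R' V' k w']
    by (simp del: mtype.simps)
qed

lemma sem_Prop_mtype_image_invariant:
  assumes "mtype P R V k ` s = mtype P R' V' k ` s'" "p \<in> P" "sem W R V b s (Prop p)"
  shows "sem W' R' V' b s' (Prop p)"
proof -
  have "\<exists>w\<in>s. w \<in> V p \<longleftrightarrow> w' \<in> V' p" if "w' \<in> s'" for w'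
  proof -
    have "mtype P R' V' k w' \<in> mtype P R V k ` s"
      using assms(1) that by simp
    then obtain w where "w \<in> s" "mtype P R' V' k w' = mtype P R V k w"
      by blast
    then show ?thesis
      using mtype_eq_imp_atoms_eq[of P R' V' k w' R V w p] assms(2) by blast
  qed
  with assms(3) show ?thesis
    by (cases b) auto
qed

lemma sem_Dia_mtype_image_invariant:
  assumes "finite P" "mtype P R V (Suc j) ` s = mtype P R' V' (Suc j) ` s'"
    and IH: "\<And>b t t'. mtype P R V j ` t = mtype P R' V' j ` t' \<Longrightarrow> sem W R V b t a \<Longrightarrow> sem W' R' V' b t' a"
    and "sem W R V b s (Dia a)"
  shows "sem W' R' V' b s' (Dia a)"
proof (cases b)
  case True
  have "\<exists>t'. t' \<noteq> {} \<and> t' \<subseteq> R' `` {w'} \<and> sem W' R' V' True t' a" if w': "w' \<in> s'" for w'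
  proof -
    obtain w where w: "w \<in> s" and succ: "mtype P R V j ` (R `` {w}) = mtype P R' V' j ` (R' `` {w'})"
      by (rule mtype_Suc_image_eq_obtain_successors[OF assms(1,2) w'])
    have "\<exists>t. t \<noteq> {} \<and> t \<subseteq> R `` {w} \<and> sem W R V True t a"
      using assms(4) True w by simp
    then obtain t where t: "t \<noteq> {}" "t \<subseteq> R `` {w}" "sem W R V True t a"
      by blast
    obtain t' where t': "t' \<subseteq> R' `` {w'}" "mtype P R V j ` t = mtype P R' V' j ` t'"
      by (rule image_eq_obtain_subset[OF succ t(2)])
    have "t' \<noteq> {}"
      using t(1) t'(2) by auto
    with t' IH[OF t'(2) t(3)] show ?thesis
      by blast
  qed
  with True show ?thesis
    by simp
next
  case False
  have "sem W' R' V' False (R' `` {w'}) a" if w': "w' \<in> s'" for w'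
  proof -
    obtain w where "w \<in> s" and succ: "mtype P R V j ` (R `` {w}) = mtype P R' V' j ` (R' `` {w'})"
      by (rule mtype_Suc_image_eq_obtain_successors[OF assms(1,2) w'])
    then show ?thesis
      using IH[OF succ] assms(4) False by simp
  qed
  with False show ?thesis
    by simp
qed

lemma sem_mtype_image_invariant:
  assumes "finite P" "atoms \<phi> \<subseteq> P" "modal_depth \<phi> \<le> k"
    and "mtype P R V k ` s = mtype P R' V' k ` s'"
    and "sem W R V b s \<phi>"
  shows "sem W' R' V' b s' \<phi>"
  using assms(2-)
proof (induction \<phi> arbitrary: b s s' k)
  case (Prop p)
  then show ?case
    using sem_Prop_mtype_image_invariant[OF Prop.prems(3)] by simp
next
  case (Conj a c)
  show ?case
  proof (cases b)
    case False
    then obtain t u where "s = t \<union> u" "sem W R V False t a" "sem W R V False u c"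
      using Conj.prems(4) by auto
    moreover obtain t' u' where "s' = t' \<union> u'"
      "mtype P R V k ` t = mtype P R' V' k ` t'" "mtype P R V k ` u = mtype P R' V' k ` u'"
      using image_eq_obtain_Un[OF Conj.prems(3) \<open>s = t \<union> u\<close>] .
    ultimately have "sem W' R' V' False t' a" "sem W' R' V' False u' c"
      using Conj.IH Conj.prems(1,2) by auto
    with \<open>s' = t' \<union> u'\<close> show ?thesis
      using False by auto
  qed (use Conj in auto)
next
  case (Disj a c)
  show ?case
  proof (cases b)
    case True
    then obtain t u where "s = t \<union> u" "sem W R V True t a" "sem W R V True u c"
      using Disj.prems(4) by auto
    moreover obtain t' u' where "s' = t' \<union> u'"
      "mtype P R V k ` t = mtype P R' V' k ` t'" "mtype P R V k ` u = mtype P R' V' k ` u'"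
      using image_eq_obtain_Un[OF Disj.prems(3) \<open>s = t \<union> u\<close>] .
    ultimately have "sem W' R' V' True t' a" "sem W' R' V' True u' c"
      using Disj.IH Disj.prems(1,2) by auto
    with \<open>s' = t' \<union> u'\<close> show ?thesis
      using True by auto
  qed (use Disj in auto)
next
  case (Dia a)
  obtain j where j: "k = Suc j" "modal_depth a \<le> j"
    using Dia.prems(2) by (cases k) auto
  have "atoms a \<subseteq> P"
    using Dia.prems(1) by simp
  show ?case
  proof (rule sem_Dia_mtype_image_invariant[OF assms(1)])
    show "mtype P R V (Suc j) ` s = mtype P R' V' (Suc j) ` s'"
      using Dia.prems(3) unfolding j(1) .
    show "sem W R V b s (Dia a)"
      by (rule Dia.prems(4))
    show "sem W' R' V' b t' a" if "mtype P R V j ` t = mtype P R' V' j ` t'" "sem W R V b t a" for b t t'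
      by (rule Dia.IH[OF \<open>atoms a \<subseteq> P\<close> j(2) that])
  qed
next
  case (Gor a c)
  then show ?case by (cases b) auto
next
  case (Empt a)
  then show ?case by (cases b) auto
next
  case NE
  then show ?case by (cases b) auto
qed simp

text \<open>Worlds carry their level: the same term can be a type of several depths, and only at
  level k is it read as a depth-k type.\<close>

definition canon_worlds :: "'p set \<Rightarrow> nat \<Rightarrow> (nat \<times> 'p modal_type) set" where
  "canon_worlds P n = (SIGMA k:{..n}. mtypes P k)"

definition canon_rel :: "'p set \<Rightarrow> nat \<Rightarrow> ((nat \<times> 'p modal_type) \<times> (nat \<times> 'p modal_type)) set" where
  "canon_rel P n =
     {((Suc k, \<tau>), (k, \<sigma>)) | k \<tau> \<sigma>. Suc k \<le> n \<and> \<tau> \<in> mtypes P (Suc k) \<and> \<sigma> |\<in>| succs \<tau>}"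

definition canon_val :: "'p set \<Rightarrow> nat \<Rightarrow> 'p \<Rightarrow> (nat \<times> 'p modal_type) set" where
  "canon_val P n p = {x \<in> canon_worlds P n. p \<in> label (snd x)}"

lemma finite_canon_worlds: "finite P \<Longrightarrow> finite (canon_worlds P n)"
  by (simp add: canon_worlds_def finite_mtypes)

lemma is_model_canon: "is_model (canon_worlds P n) (canon_rel P n) (canon_val P n)"
proof -
  have "(0, MType {} {||}) \<in> canon_worlds P n"
    by (auto simp: canon_worlds_def)
  moreover have "canon_rel P n \<subseteq> canon_worlds P n \<times> canon_worlds P n"
    by (auto simp: canon_rel_def canon_worlds_def)
  ultimately show ?thesis
    by (auto simp: is_model_def canon_val_def)
qed

lemma mtype_canon:
  "k \<le> n \<Longrightarrow> \<tau> \<in> mtypes P k \<Longrightarrow> mtype P (canon_rel P n) (canon_val P n) k (k, \<tau>) = \<tau>"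
proof (induction k arbitrary: \<tau>)
  case 0
  then show ?case
    by (auto simp: canon_val_def canon_worlds_def)
next
  case (Suc k)
  then obtain A S where \<tau>: "\<tau> = MType A S" "A \<subseteq> P" "fset S \<subseteq> mtypes P k"
    by auto
  have "{p \<in> P. (Suc k, \<tau>) \<in> canon_val P n p} = A"
    using Suc.prems \<tau> by (auto simp: canon_val_def canon_worlds_def)
  moreover have "canon_rel P n `` {(Suc k, \<tau>)} = Pair k ` fset S"
    using Suc.prems \<tau> by (auto simp: canon_rel_def)
  moreover have "mtype P (canon_rel P n) (canon_val P n) k ` Pair k ` fset S = fset S"
    using Suc \<tau>(3) by (force simp: image_image)
  ultimately show ?case
    using \<tau>(1) by (simp add: fset_inverse)
qed

lemma canon_countermodel:
  assumes "finite P" "atoms \<phi> \<subseteq> P" "modal_depth \<phi> \<le> n" "\<not> sem W R V True s \<phi>"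
  obtains s' where "s' \<subseteq> canon_worlds P n" "\<not> sem (canon_worlds P n) (canon_rel P n) (canon_val P n) True s' \<phi>"
proof
  let ?s' = "(\<lambda>w. (n, mtype P R V n w)) ` s"
  show "?s' \<subseteq> canon_worlds P n"
    using mtype_in_mtypes[OF assms(1)] by (auto simp: canon_worlds_def)
  have "mtype P (canon_rel P n) (canon_val P n) n (n, mtype P R V n w) = mtype P R V n w" for w
    by (rule mtype_canon[OF order_refl mtype_in_mtypes[OF assms(1)]])
  then have "mtype P (canon_rel P n) (canon_val P n) n ` ?s' = mtype P R V n ` s"
    by (simp add: image_image)
  from sem_mtype_image_invariant[OF assms(1-3) this] assms(4)
  show "\<not> sem (canon_worlds P n) (canon_rel P n) (canon_val P n) True ?s' \<phi>"
    by blast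
qed

lemma Image_map_prod_inj_on:
  assumes "inj_on f D" "R \<subseteq> D \<times> D" "x \<in> D"
  shows "(map_prod f f ` R) `` {f x} = f ` (R `` {x})"
proof
  show "(map_prod f f ` R) `` {f x} \<subseteq> f ` (R `` {x})"
    using assms by (auto dest: inj_onD)
qed force

lemma mtype_inj_image:
  assumes "inj_on f D" "R \<subseteq> D \<times> D" "\<forall>p. V p \<subseteq> D" "x \<in> D"
  shows "mtype P (map_prod f f ` R) (\<lambda>p. f ` V p) k (f x) = mtype P R V k x"
  using assms(4)
proof (induction k arbitrary: x)
  case 0
  have "f x \<in> f ` V p \<longleftrightarrow> x \<in> V p" for p
    using inj_on_image_mem_iff[OF assms(1) 0] assms(3) by blast
  then show ?case
    by simp
next
  case (Suc k)
  have "f x \<in> f ` V p \<longleftrightarrow> x \<in> V p" for p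
    using inj_on_image_mem_iff[OF assms(1) Suc.prems] assms(3) by blast
  moreover have "mtype P (map_prod f f ` R) (\<lambda>p. f ` V p) k ` ((map_prod f f ` R) `` {f x})
      = mtype P R V k ` (R `` {x})"
    using Suc.IH assms(2) Image_map_prod_inj_on[OF assms(1,2) Suc.prems] by (force simp: image_image)
  ultimately show ?case
    by simp
qed

lemma is_model_image: "is_model W R V \<Longrightarrow> is_model (f ` W) (map_prod f f ` R) (\<lambda>p. f ` V p)"
  by (auto simp: is_model_def)

lemma sem_inj_image_iff:
  assumes "is_model W R V" "s \<subseteq> W" "inj_on f W"
  shows "sem (f ` W) (map_prod f f ` R) (\<lambda>p. f ` V p) b (f ` s) \<phi> \<longleftrightarrow> sem W R V b s \<phi>"
proof -
  let ?P = "atoms \<phi>" and ?k = "modal_depth \<phi>"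
  have "R \<subseteq> W \<times> W" "\<forall>p. V p \<subseteq> W"
    using assms(1) by (simp_all add: is_model_def)
  then have "mtype ?P (map_prod f f ` R) (\<lambda>p. f ` V p) ?k (f w) = mtype ?P R V ?k w" if "w \<in> s" for w
    using mtype_inj_image[OF assms(3)] assms(2) that by blast
  then have "mtype ?P (map_prod f f ` R) (\<lambda>p. f ` V p) ?k ` f ` s = mtype ?P R V ?k ` s"
    unfolding image_image by (rule image_cong[OF refl])
  then show ?thesis
    using sem_mtype_image_invariant[OF finite_atoms order_refl order_refl] by metis
qed

lemma obtain_inj_on_infinite:
  assumes "finite A" "infinite (UNIV :: 'b set)"
  obtains f :: "'a \<Rightarrow> 'b" where "inj_on f A"
proof -
  obtain h :: "'a \<Rightarrow> nat" where "inj_on h A"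
    using finite_imp_inj_to_nat_seg[OF assms(1)] by blast
  moreover obtain g :: "nat \<Rightarrow> 'b" where "inj g"
    using infinite_countable_subset[OF assms(2)] by blast
  ultimately show ?thesis
    using that[of "g \<circ> h"] by (simp add: comp_inj_on inj_on_subset)
qed

lemma finite_countermodel_infinite_UNIV:
  fixes \<phi> :: "'p form"
  assumes "infinite (UNIV :: 'w set)" "\<not> sem W0 R0 V0 True s0 \<phi>"
  shows "\<exists>(W :: 'w set) R V s. is_model W R V \<and> finite W \<and> s \<subseteq> W \<and> \<not> sem W R V True s \<phi>"
proof -
  let ?W = "canon_worlds (atoms \<phi>) (modal_depth \<phi>)"
    and ?R = "canon_rel (atoms \<phi>) (modal_depth \<phi>)"
    and ?V = "canon_val (atoms \<phi>) (modal_depth \<phi>)"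
  obtain s where s: "s \<subseteq> ?W" "\<not> sem ?W ?R ?V True s \<phi>"
    using canon_countermodel[OF finite_atoms order_refl order_refl assms(2)] .
  obtain f :: "nat \<times> 'p modal_type \<Rightarrow> 'w" where f: "inj_on f ?W"
    using obtain_inj_on_infinite[OF finite_canon_worlds[OF finite_atoms] assms(1)] .
  have "\<not> sem (f ` ?W) (map_prod f f ` ?R) (\<lambda>p. f ` ?V p) True (f ` s) \<phi>"
    using sem_inj_image_iff[OF is_model_canon s(1) f] s(2) by blast
  moreover have "is_model (f ` ?W) (map_prod f f ` ?R) (\<lambda>p. f ` ?V p)"
    by (rule is_model_image[OF is_model_canon])
  moreover have "finite (f ` ?W)" "f ` s \<subseteq> f ` ?W"
    using finite_canon_worlds[OF finite_atoms] s(1) by auto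
  ultimately show ?thesis
    by (intro exI conjI) assumption+
qed

theorem proposition3p21:
  fixes \<phi> :: "'p form"
  assumes "BSML_gor \<phi> \<or> BSML_empt \<phi>"
    and "\<not> valid TYPE('w) \<phi>"
  shows "\<exists>(W :: 'w set) R V s. is_model W R V \<and> finite W \<and> s \<subseteq> W
           \<and> \<not> sem W R V True s \<phi>"
proof -
  obtain W :: "'w set" and R V s where "is_model W R V" "s \<subseteq> W" "\<not> sem W R V True s \<phi>"
    using assms(2) unfolding valid_def by blast
  show ?thesis
  proof (cases "finite (UNIV :: 'w set)")
    case True
    then have "finite W"
      by (rule finite_subset[OF subset_UNIV])
    with \<open>is_model W R V\<close> \<open>s \<subseteq> W\<close> \<open>\<not> sem W R V True s \<phi>\<close> show ?thesis
      by blast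
  next
    case False
    then show ?thesis
      using \<open>\<not> sem W R V True s \<phi>\<close> by (rule finite_countermodel_infinite_UNIV)
  qed
qed

end
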